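(* Assume the linear setting below. For every integer $k\ge0$ and every integer $n$ with $s^k\le n<s^{k+1}$, \[ b_{s^{k+1}-1}\le b_n\le b_{s^k}. \]
   Context: Linear setting: integers $q\ge2$, $r\in\{0,1,\dots,q-1\}$, $p>q+r$; $A=\{d\in\{0,1,\dots,p-1\}: d\equiv r\pmod q\}$, $s=\#A\ge2$, and $h(i)=qi+r$ for $0\le i\le s-1$. For a positive integer $n$ with base-$s$ expansion $n=\sum_{i=0}^k\varepsilon_i s^i$ ($\varepsilon_k\ne0$), $a_n=\sum_{i=0}^k h(\varepsilon_i)p^i$ and $b_n=a_n/n^{\log_s p}$. *)

theory Defs
  imports Complex_Main
begin

definition digitSet :: "nat \<Rightarrow> nat \<Rightarrow> nat \<Rightarrow> nat set" where
  "digitSet q r p = {d. d < p \<and> d mod q = r}"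

definition sz :: "nat \<Rightarrow> nat \<Rightarrow> nat \<Rightarrow> nat" where
  "sz q r p = card (digitSet q r p)"

definition hmap :: "nat \<Rightarrow> nat \<Rightarrow> nat \<Rightarrow> nat" where
  "hmap q r i = q * i + r"

definition ndigits :: "nat \<Rightarrow> nat \<Rightarrow> nat" where
  "ndigits s n = (LEAST m. n < s ^ m)"

definition digit :: "nat \<Rightarrow> nat \<Rightarrow> nat \<Rightarrow> nat" where
  "digit s n i = (n div s ^ i) mod s"

definition aseq :: "nat \<Rightarrow> nat \<Rightarrow> nat \<Rightarrow> nat \<Rightarrow> nat" where
  "aseq q r p n = (let s = sz q r p in
     (\<Sum>i<ndigits s n. hmap q r (digit s n i) * p ^ i))"

definition bseq :: "nat \<Rightarrow> nat \<Rightarrow> nat \<Rightarrow> nat \<Rightarrow> real" where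
  "bseq q r p n = real (aseq q r p n) / real n powr (log (real (sz q r p)) (real p))"

end

theory Submission
  imports Defs "HOL-Analysis.Analysis"
begin

text \<open>
  Write \<open>s = #A\<close> and \<open>\<alpha> = log\<^sub>s p \<ge> 1\<close>. For \<open>n\<close> with \<open>k + 1\<close> base-\<open>s\<close> digits,
  \<open>a\<^sub>n = q G(n) + r (1 + p + \<dots> + p\<^sup>k)\<close>, where \<open>G(n)\<close> reads the base-\<open>s\<close> digits of \<open>n\<close> in base \<open>p\<close>.
  Peeling off the last digit, \<open>G(s m + e) = p G(m) + e\<close>, and convexity of \<open>x\<^sup>\<alpha>\<close> (with
  \<open>s\<^sup>\<alpha> = p\<close>) propagates the two bounds
  \<open>c ((n + 1)\<^sup>\<alpha> - 1) \<le> G(n) \<le> n\<^sup>\<alpha>\<close>, \<open>c = (s - 1)/(p - 1)\<close>,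
  along this recursion. The upper bound is attained at \<open>n = s\<^sup>k\<close> and the lower one at
  \<open>n = s\<^sup>k\<^sup>+\<^sup>1 - 1\<close>; since \<open>((x + 1)\<^sup>\<alpha> - 1)/x\<^sup>\<alpha>\<close> decreases, both the \<open>G\<close>-part and the
  \<open>r\<close>-part of \<open>b\<^sub>n = a\<^sub>n / n\<^sup>\<alpha>\<close> lie between their values at these two endpoints.
\<close>

lemma convex_on_increment_mono:
  fixes f :: "real \<Rightarrow> real"
  assumes f: "convex_on I f" and I: "a \<in> I" "b + d \<in> I" and "a \<le> b" "0 \<le> d"
  shows "f (a + d) - f a \<le> f (b + d) - f b"
proof (cases "d = 0 \<or> a = b")
  case False
  then have "a < b" "0 < d" using assms by auto
  have "(f a - f (a + d)) / (a - (a + d)) \<le> (f a - f (b + d)) / (a - (b + d))"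
    by (rule convex_on_slope_le(1)[OF f I]) (use \<open>a < b\<close> \<open>0 < d\<close> in auto)
  also have "\<dots> \<le> (f b - f (b + d)) / (b - (b + d))"
    by (rule convex_on_slope_le(2)[OF f I]) (use \<open>a < b\<close> \<open>0 < d\<close> in auto)
  also have "(f a - f (a + d)) / (a - (a + d)) = (f (a + d) - f a) / d"
    using \<open>0 < d\<close> by (simp add: field_simps)
  also have "(f b - f (b + d)) / (b - (b + d)) = (f (b + d) - f b) / d"
    using \<open>0 < d\<close> by (simp add: field_simps)
  finally show ?thesis using \<open>0 < d\<close> by (simp add: divide_le_cancel)
qed auto

lemma powr_increment_mono:
  fixes a b d \<alpha> :: real
  assumes "1 \<le> \<alpha>" "0 < a" "a \<le> b" "0 \<le> d"
  shows "(a + d) powr \<alpha> - a powr \<alpha> \<le> (b + d) powr \<alpha> - b powr \<alpha>"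
  using convex_on_increment_mono[OF powr_convex[OF assms(1)]] assms by auto

lemma powr_increment_ratio_antimono:
  fixes x y \<alpha> :: real
  assumes "1 \<le> \<alpha>" "1 \<le> x" "x \<le> y"
  shows "((y + 1) powr \<alpha> - 1) / y powr \<alpha> \<le> ((x + 1) powr \<alpha> - 1) / x powr \<alpha>"
proof -
  have ratio: "((z + 1) powr \<alpha> - 1) / z powr \<alpha> = (1 / z + 1) powr \<alpha> - (1 / z) powr \<alpha>"
    if "1 \<le> z" for z :: real
  proof -
    have "1 / z + 1 = (z + 1) / z" using that by (simp add: field_simps)
    then show ?thesis using that by (simp add: powr_divide diff_divide_distrib)
  qed
  have "(1 / y + 1) powr \<alpha> - (1 / y) powr \<alpha> \<le> (1 / x + 1) powr \<alpha> - (1 / x) powr \<alpha>"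
    using powr_increment_mono[of \<alpha> "1 / y" "1 / x" 1] assms by (simp add: frac_le add.commute)
  then show ?thesis using ratio assms by simp
qed

lemma power_powr_commute: "0 \<le> (x :: real) \<Longrightarrow> (x ^ j) powr a = (x powr a) ^ j"
  by (induction j) (auto simp: powr_mult)

lemma log_base_ge_one:
  assumes "2 \<le> s" "s \<le> p"
  shows "1 \<le> log (real s) (real p)"
proof -
  have "log (real s) (real s) \<le> log (real s) (real p)" using assms by simp
  then show ?thesis using assms by simp
qed

lemma powr_log_base_pow:
  assumes "2 \<le> s" "s \<le> p"
  shows "(real s ^ k) powr log (real s) (real p) = real p ^ k"
  using power_powr_commute[of "real s" k] assms by simp

text \<open>
  The one-digit steps of the two bounds on \<open>G\<close>: passing from \<open>m\<close> to \<open>n = s m + e\<close>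
  multiplies \<open>G\<close> by \<open>p = s\<^sup>\<alpha>\<close> and adds the digit \<open>e\<close>.
\<close>

lemma powr_upper_digit_step:
  fixes s \<alpha> :: real and m e :: nat
  assumes "1 \<le> \<alpha>" "1 \<le> s"
  shows "real e + s powr \<alpha> * real m powr \<alpha> \<le> (s * real m + real e) powr \<alpha>"
proof (cases "m = 0")
  case True
  have "real e \<le> real e powr \<alpha>"
    using powr_mono[of 1 \<alpha> "real e"] assms by (cases "e = 0") auto
  with True show ?thesis by simp
next
  case False
  have "(1 + real e) powr 1 \<le> (1 + real e) powr \<alpha>"
    using assms by (intro powr_mono) auto
  also have "(1 + real e) powr \<alpha> - 1 powr \<alpha> \<le> (s * real m + real e) powr \<alpha> - (s * real m) powr \<alpha>"
    using powr_increment_mono[of \<alpha> 1 "s * real m" "real e"] assms False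
    by (simp add: mult_ge1_I)
  finally show ?thesis using assms by (simp add: powr_mult)
qed

lemma powr_lower_digit_step:
  fixes s p c g m e \<alpha> :: real
  assumes "1 \<le> \<alpha>" "1 < s" "s powr \<alpha> = p" "0 \<le> m" "0 \<le> e" "e \<le> s - 1"
    and c: "0 \<le> c" "c * (p - 1) = s - 1"
    and IH: "c * ((m + 1) powr \<alpha> - 1) \<le> g"
  shows "c * ((s * m + e + 1) powr \<alpha> - 1) \<le> p * g + e"
proof -
  have "0 < p" using assms by auto
  define A where "A = (s * m + 1) powr \<alpha>"
  define B where "B = (s * m + s) powr \<alpha>"
  define t where "t = e / (s - 1)"
  have t: "0 \<le> t" "t \<le> 1" "t * (s - 1) = e" using assms by (auto simp: t_def)
  have "s * m + s = s * (m + 1)" by (simp add: algebra_simps)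
  then have B: "B = p * (m + 1) powr \<alpha>"
    using assms by (simp add: B_def powr_mult)
  \<comment> \<open>By convexity the left side lies below the chord over the digit range \<open>0 \<le> e \<le> s - 1\<close>,
     so it suffices to check the two ends \<open>e = 0\<close> and \<open>e = s - 1\<close>.\<close>
  have "0 \<le> s * m" using assms by simp
  then have "convex_on {s * m + 1..s * m + s} (\<lambda>x. x powr \<alpha>)"
    by (intro convex_on_subset[OF powr_convex[OF assms(1)]]) auto
  from convex_onD_Icc'[OF this, of "s * m + e + 1"]
  have chord: "(s * m + e + 1) powr \<alpha> \<le> A + t * (B - A)"
    using assms by (simp add: A_def B_def t_def diff_divide_distrib algebra_simps)
  have "c * (B - 1) = p * (c * ((m + 1) powr \<alpha> - 1)) + c * (p - 1)"
    by (simp add: B algebra_simps)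
  also have "\<dots> \<le> p * g + (s - 1)"
    using IH \<open>0 < p\<close> by (simp add: c mult_left_mono)
  finally have upper_end: "c * (B - 1) \<le> p * g + (s - 1)" .
  have "(1 + (s - 1)) powr \<alpha> - 1 powr \<alpha> \<le> (s * m + 1 + (s - 1)) powr \<alpha> - (s * m + 1) powr \<alpha>"
    using assms by (intro powr_increment_mono) auto
  then have "c * (A - 1) \<le> c * (B - p)"
    using assms by (intro mult_left_mono) (auto simp: A_def B_def algebra_simps)
  also have "\<dots> = p * (c * ((m + 1) powr \<alpha> - 1))" by (simp add: B algebra_simps)
  also have "\<dots> \<le> p * g" using IH \<open>0 < p\<close> by (simp add: mult_left_mono)
  finally have lower_end: "c * (A - 1) \<le> p * g" .
  have "c * ((s * m + e + 1) powr \<alpha> - 1) \<le> c * (A + t * (B - A) - 1)"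
    using chord c by (intro mult_left_mono) auto
  also have "\<dots> = (1 - t) * (c * (A - 1)) + t * (c * (B - 1))" by (simp add: algebra_simps)
  also have "\<dots> \<le> (1 - t) * (p * g) + t * (p * g + (s - 1))"
    using t upper_end lower_end by (intro add_mono mult_left_mono) auto
  also have "\<dots> = p * g + e" using t by (simp add: algebra_simps)
  finally show ?thesis .
qed

definition rebase :: "nat \<Rightarrow> nat \<Rightarrow> nat \<Rightarrow> nat \<Rightarrow> nat" where
  "rebase s p k n = (\<Sum>i<k. digit s n i * p ^ i)"

lemma rebase_0 [simp]: "rebase s p 0 n = 0"
  by (simp add: rebase_def)

lemma rebase_Suc: "rebase s p (Suc k) n = n mod s + p * rebase s p k (n div s)"
proof -
  have "rebase s p (Suc k) n = digit s n 0 + (\<Sum>i<k. digit s n (Suc i) * p ^ Suc i)"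
    unfolding rebase_def by (subst sum.lessThan_Suc_shift) simp
  also have "(\<Sum>i<k. digit s n (Suc i) * p ^ Suc i) = p * rebase s p k (n div s)"
    by (simp add: rebase_def sum_distrib_left digit_def div_mult2_eq ac_simps)
  finally show ?thesis by (simp add: digit_def)
qed

lemma rebase_pow: "2 \<le> s \<Longrightarrow> rebase s p (Suc k) (s ^ k) = p ^ k"
  by (induction k) (simp_all add: rebase_Suc)

lemma rebase_pow_minus_one:
  "2 \<le> s \<Longrightarrow> rebase s p k (s ^ k - 1) = (s - 1) * (\<Sum>i<k. p ^ i)"
proof (induction k)
  case (Suc k)
  have eq: "s ^ Suc k - 1 = (s - 1) + s * (s ^ k - 1)"
    using Suc.prems by (simp add: algebra_simps diff_mult_distrib2)
  have "(s ^ Suc k - 1) mod s = s - 1"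
    unfolding eq mod_mult_self2 using Suc.prems by simp
  moreover have "(s ^ Suc k - 1) div s = s ^ k - 1"
    unfolding eq using Suc.prems by (simp only: div_mult_self2) simp
  moreover have "(\<Sum>i<Suc k. p ^ i) = 1 + p * (\<Sum>i<k. p ^ i)"
    by (subst sum.lessThan_Suc_shift) (simp add: sum_distrib_left)
  ultimately show ?case
    using Suc by (simp add: rebase_Suc distrib_left mult.left_commute)
qed simp

lemma rebase_le_powr:
  assumes "2 \<le> s" "s \<le> p" "n < s ^ k"
  shows "real (rebase s p k n) \<le> real n powr log (real s) (real p)"
  using assms(3)
proof (induction k arbitrary: n)
  case (Suc k)
  define \<alpha> where "\<alpha> = log (real s) (real p)"
  have "n div s < s ^ k"
    using Suc.prems assms(1) by (simp add: div_less_iff_less_mult mult.commute)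
  then have "real (rebase s p (Suc k) n) \<le> real (n mod s) + real p * real (n div s) powr \<alpha>"
    using Suc.IH[OF \<open>n div s < s ^ k\<close>] by (simp add: rebase_Suc \<alpha>_def mult_left_mono)
  also have "\<dots> \<le> (real s * real (n div s) + real (n mod s)) powr \<alpha>"
    using powr_upper_digit_step[of \<alpha> "real s"] log_base_ge_one[OF assms(1,2)] assms
    by (simp add: \<alpha>_def)
  also have "real s * real (n div s) + real (n mod s) = real n"
    by (metis of_nat_add of_nat_mult div_mult_mod_eq mult.commute)
  finally show ?case unfolding \<alpha>_def .
qed simp

lemma powr_le_rebase:
  assumes "2 \<le> s" "s \<le> p" "n < s ^ k"
  shows "(real s - 1) / (real p - 1) * ((real n + 1) powr log (real s) (real p) - 1)
           \<le> real (rebase s p k n)"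
  using assms(3)
proof (induction k arbitrary: n)
  case (Suc k)
  have "n div s < s ^ k"
    using Suc.prems assms(1) by (simp add: div_less_iff_less_mult mult.commute)
  note IH = Suc.IH[OF this]
  have "n mod s \<le> s - 1" using assms(1) by (simp add: less_Suc_eq_le[symmetric])
  then have "real (n mod s) \<le> real s - 1" using assms(1) by linarith
  from powr_lower_digit_step[OF log_base_ge_one[OF assms(1,2)] _ _ _ _ this _ _ IH]
  have "(real s - 1) / (real p - 1) *
          ((real s * real (n div s) + real (n mod s) + 1) powr log (real s) (real p) - 1)
          \<le> real p * real (rebase s p k (n div s)) + real (n mod s)"
    using assms by simp
  also have "real s * real (n div s) + real (n mod s) = real n"
    by (metis of_nat_add of_nat_mult div_mult_mod_eq mult.commute)
  finally show ?case by (simp add: rebase_Suc)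
qed simp

lemma rebase_ratio_le_pow:
  fixes u v :: real
  assumes "2 \<le> s" "s \<le> p" "s ^ k \<le> n" "n < s ^ Suc k" "0 \<le> u" "0 \<le> v"
  defines "\<alpha> \<equiv> log (real s) (real p)"
  shows "(u * rebase s p (Suc k) n + v) / real n powr \<alpha>
           \<le> (u * rebase s p (Suc k) (s ^ k) + v) / real (s ^ k) powr \<alpha>"
proof -
  have pk: "(real s ^ k) powr \<alpha> = real p ^ k"
    using powr_log_base_pow assms by (simp add: \<alpha>_def)
  have "real (s ^ k) powr \<alpha> \<le> real n powr \<alpha>"
    using assms(3) log_base_ge_one[OF assms(1,2)] by (intro powr_mono2) (auto simp: \<alpha>_def)
  then have n_ge: "real p ^ k \<le> real n powr \<alpha>" by (simp add: pk)
  have p_pos: "0 < real p" using assms by simp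
  have "0 < s ^ k" using assms(1) by simp
  then have n_pos: "0 < n" using assms(3) by linarith
  have "(u * rebase s p (Suc k) n + v) / real n powr \<alpha>
          = u * (rebase s p (Suc k) n / real n powr \<alpha>) + v / real n powr \<alpha>"
    by (simp add: add_divide_distrib)
  also have "\<dots> \<le> u * 1 + v / real p ^ k"
  proof (intro add_mono mult_left_mono)
    show "rebase s p (Suc k) n / real n powr \<alpha> \<le> 1"
      using rebase_le_powr[OF assms(1,2,4)] n_ge p_pos
      by (auto simp: \<alpha>_def divide_le_eq_1)
    show "v / real n powr \<alpha> \<le> v / real p ^ k"
      using n_ge p_pos n_pos assms(6) by (intro divide_left_mono mult_pos_pos) auto
  qed (use assms in auto)
  also have "\<dots> = (u * rebase s p (Suc k) (s ^ k) + v) / real (s ^ k) powr \<alpha>"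
    using p_pos by (simp add: pk rebase_pow[OF assms(1)] field_simps)
  finally show ?thesis .
qed

lemma rebase_ratio_ge_pow_minus_one:
  fixes u v :: real
  assumes "2 \<le> s" "s \<le> p" "1 \<le> n" "n < s ^ K" "0 \<le> u" "0 \<le> v"
  defines "\<alpha> \<equiv> log (real s) (real p)" and "N \<equiv> s ^ K - 1"
  shows "(u * rebase s p K N + v) / real N powr \<alpha> \<le> (u * rebase s p K n + v) / real n powr \<alpha>"
proof -
  define c where "c = (real s - 1) / (real p - 1)"
  define \<psi> where "\<psi> = (\<lambda>x::real. ((x + 1) powr \<alpha> - 1) / x powr \<alpha>)"
  have \<alpha>: "1 \<le> \<alpha>" using log_base_ge_one assms by (simp add: \<alpha>_def)
  have nN: "real n \<le> real N" using assms(4) unfolding N_def by (intro of_nat_mono) linarith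
  have c_nonneg: "0 \<le> c" using assms by (simp add: c_def)
  have GN: "real (rebase s p K N) = c * ((real N + 1) powr \<alpha> - 1)"
  proof -
    have "real (rebase s p K N) = (real s - 1) * (\<Sum>i<K. real p ^ i)"
      using rebase_pow_minus_one[OF assms(1), of p K] assms(1) by (simp add: N_def of_nat_diff)
    also have "\<dots> = c * ((real p - 1) * (\<Sum>i<K. real p ^ i))"
      using assms by (simp add: c_def)
    also have "(real p - 1) * (\<Sum>i<K. real p ^ i) = real p ^ K - 1"
      by (simp add: power_diff_1_eq algebra_simps)
    also have "real p ^ K = (real N + 1) powr \<alpha>"
      using powr_log_base_pow assms by (simp add: N_def \<alpha>_def of_nat_diff)
    finally show ?thesis .
  qed
  have "(u * rebase s p K N + v) / real N powr \<alpha> = u * c * \<psi> (real N) + v / real N powr \<alpha>"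
    by (simp add: GN \<psi>_def add_divide_distrib)
  also have "\<dots> \<le> u * c * \<psi> (real n) + v / real n powr \<alpha>"
  proof (intro add_mono mult_left_mono)
    show "\<psi> (real N) \<le> \<psi> (real n)"
      unfolding \<psi>_def using powr_increment_ratio_antimono \<alpha> assms(3) nN by simp
    show "v / real N powr \<alpha> \<le> v / real n powr \<alpha>"
      using assms(3,6) nN \<alpha> by (intro divide_left_mono powr_mono2 mult_pos_pos) auto
  qed (use assms c_nonneg in auto)
  also have "\<dots> = (u * (c * ((real n + 1) powr \<alpha> - 1)) + v) / real n powr \<alpha>"
    by (simp add: \<psi>_def add_divide_distrib)
  also have "\<dots> \<le> (u * rebase s p K n + v) / real n powr \<alpha>"
    using powr_le_rebase[OF assms(1,2,4)] assms(3,5)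
    by (intro divide_right_mono add_mono mult_left_mono) (auto simp: c_def \<alpha>_def)
  finally show ?thesis .
qed

lemma ndigits_eq:
  assumes "2 \<le> s" "s ^ k \<le> n" "n < s ^ Suc k"
  shows "ndigits s n = Suc k"
  unfolding ndigits_def
proof (rule Least_equality)
  fix m assume "n < s ^ m"
  show "Suc k \<le> m"
  proof (rule ccontr)
    assume "\<not> Suc k \<le> m"
    then have "s ^ m \<le> s ^ k" using assms(1) by (intro power_increasing) auto
    then show False using assms \<open>n < s ^ m\<close> by linarith
  qed
qed (use assms in simp)

lemma sz_le: "sz q r p \<le> p"
proof -
  have "card (digitSet q r p) \<le> card {..<p}"
    by (intro card_mono) (auto simp: digitSet_def)
  then show ?thesis by (simp add: sz_def)
qed

lemma bseq_eq_rebase: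
  assumes "2 \<le> sz q r p" "sz q r p ^ k \<le> n" "n < sz q r p ^ Suc k"
  shows "bseq q r p n = (real q * rebase (sz q r p) p (Suc k) n + real (r * (\<Sum>i<Suc k. p ^ i)))
                          / real n powr log (real (sz q r p)) (real p)"
  using ndigits_eq[OF assms]
  by (simp add: bseq_def aseq_def Let_def hmap_def rebase_def sum.distrib sum_distrib_left algebra_simps)

theorem mainTheorem16:
  fixes q r p k n :: nat
  assumes "q \<ge> 2" and "r < q" and "p > q + r" and "sz q r p \<ge> 2"
    and "sz q r p ^ k \<le> n" and "n < sz q r p ^ (k + 1)"
  shows "bseq q r p (sz q r p ^ (k + 1) - 1) \<le> bseq q r p n
       \<and> bseq q r p n \<le> bseq q r p (sz q r p ^ k)"
proof -
  define s where "s = sz q r p"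
  have s: "2 \<le> s" "s \<le> p" using assms(4) sz_le by (auto simp: s_def)
  have "1 \<le> s ^ k" using s by simp
  then have n: "s ^ k \<le> n" "n < s ^ Suc k" "1 \<le> n"
    using assms(5,6) by (auto simp: s_def)
  have N: "s ^ k \<le> s ^ Suc k - 1" "s ^ Suc k - 1 < s ^ Suc k"
    using n by linarith+
  have k: "s ^ k \<le> s ^ k" "s ^ k < s ^ Suc k"
    using n by linarith+
  have v: "0 \<le> real (r * (\<Sum>i<Suc k. p ^ i))" by (simp only: of_nat_0_le_iff)
  note b = bseq_eq_rebase[OF assms(4), folded s_def]
  have "bseq q r p (s ^ Suc k - 1) \<le> bseq q r p n"
    unfolding b[OF N] b[OF n(1,2)]
    by (rule rebase_ratio_ge_pow_minus_one) (use s n v in auto)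
  moreover have "bseq q r p n \<le> bseq q r p (s ^ k)"
    unfolding b[OF n(1,2)] b[OF k]
    by (rule rebase_ratio_le_pow) (use s n v in auto)
  ultimately show ?thesis by (simp add: s_def)
qed

end
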